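(* For every integer $k\ge 0$, the number of projection-surjective subgroups of $Z_2^k$ is $$n_k=\sum_{i=0}^k(-1)^{i+k}\binom{k}{i}\sum_{j=0}^i{\binom{i}{j}}_2,\qquad\text{where}\qquad {\binom{i}{j}}_2=\frac{\prod_{l=0}^{j-1}\left(2^{i-l}-1\right)}{\prod_{l=1}^j\left(2^l-1\right)}.$$
   Context: A subgroup $H$ of $Z_2^k=Z_2\times\cdots\times Z_2$ is projection-surjective if its image under each of the $k$ coordinate projections $Z_2^k\to Z_2$ is all of $Z_2$. *)

theory Defs
  imports "HOL-Algebra.Elementary_Groups" "HOL-Algebra.Product_Groups"
begin

definition Z2pow :: "nat \<Rightarrow> (nat \<Rightarrow> int) monoid" where
  "Z2pow k = product_group {..<k} (\<lambda>_. integer_mod_group 2)"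

definition proj_surjective :: "nat \<Rightarrow> (nat \<Rightarrow> int) set \<Rightarrow> bool" where
  "proj_surjective k H \<longleftrightarrow>
     (\<forall>i<k. (\<lambda>x. x i) ` H = carrier (integer_mod_group 2))"

definition gbinom2 :: "nat \<Rightarrow> nat \<Rightarrow> rat" where
  "gbinom2 i j = (\<Prod>l\<in>{0..<j}. (2::rat) ^ (i - l) - 1) / (\<Prod>l\<in>{1..j}. (2::rat) ^ l - 1)"

end

theory Submission
  imports Defs "HOL-Computational_Algebra.Primes"
begin

text \<open>
  Splitting a subgroup H of Z_2^I along a coordinate i gives the subgroup K of elements with
  x_i = 0 and the set W of elements with x_i = 1, both with coordinate i deleted; W is empty or a
  coset of K, and every such pair (K, W) arises exactly once. Counting cosets by Lagrange yields
  the q-Pascal recurrence, so the number of subgroups of order 2^j of Z_2^n is the Gaussian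
  binomial coefficient [n choose j]_2. A subgroup vanishing in all coordinates outside S is the
  same as a subgroup of Z_2^S, so Moebius inversion over the set of coordinates on which a
  subgroup does not vanish counts the projection-surjective subgroups.
\<close>

section \<open>The elementary abelian group Z_2^I\<close>

text \<open>Indexing by an arbitrary set of coordinates lets us delete a coordinate (I - {i}) or restrict
  to a subset of them.\<close>

definition Z2cube :: "'a set \<Rightarrow> ('a \<Rightarrow> int) monoid" where
  "Z2cube I = product_group I (\<lambda>_. integer_mod_group 2)"

lemma Z2pow_eq_Z2cube: "Z2pow k = Z2cube {..<k}"
  by (simp add: Z2pow_def Z2cube_def)

lemma carrier_Z2cube: "carrier (Z2cube I) = (\<Pi>\<^sub>E j\<in>I. {0, 1})"
proof -
  have "{0..<int 2} = {0, 1}" by auto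
  then show ?thesis by (simp add: Z2cube_def carrier_integer_mod_group)
qed

lemma one_Z2cube: "\<one>\<^bsub>Z2cube I\<^esub> = (\<lambda>j\<in>I. 0)"
  by (simp add: Z2cube_def)

lemma mult_Z2cube: "x \<otimes>\<^bsub>Z2cube I\<^esub> y = (\<lambda>j\<in>I. (x j + y j) mod 2)"
  by (simp add: Z2cube_def)

lemma comm_group_Z2cube: "comm_group (Z2cube I)"
proof (rule group.group_comm_groupI)
  show "group (Z2cube I)" by (simp add: Z2cube_def)
  show "x \<otimes>\<^bsub>Z2cube I\<^esub> y = y \<otimes>\<^bsub>Z2cube I\<^esub> x" for x y
    by (simp add: mult_Z2cube add.commute)
qed

interpretation Z2cube: comm_group "Z2cube I"
  by (rule comm_group_Z2cube)

lemma Z2cube_mult_self: "x \<in> carrier (Z2cube I) \<Longrightarrow> x \<otimes>\<^bsub>Z2cube I\<^esub> x = \<one>\<^bsub>Z2cube I\<^esub>"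
  by (auto simp: mult_Z2cube one_Z2cube carrier_Z2cube)

lemma Z2cube_inv: "x \<in> carrier (Z2cube I) \<Longrightarrow> inv\<^bsub>Z2cube I\<^esub> x = x"
  by (simp add: Z2cube.inv_equality Z2cube_mult_self)

lemma card_carrier_Z2cube: "finite I \<Longrightarrow> card (carrier (Z2cube I)) = 2 ^ card I"
  by (simp add: carrier_Z2cube card_PiE numeral_2_eq_2)

lemma finite_carrier_Z2cube: "finite I \<Longrightarrow> finite (carrier (Z2cube I))"
  by (simp add: carrier_Z2cube finite_PiE)

lemma card_subgroup_Z2cube_power_of_two:
  assumes "finite I" "subgroup H (Z2cube I)"
  shows "\<exists>j\<le>card I. card H = 2 ^ j"
proof -
  have "card (rcosets\<^bsub>Z2cube I\<^esub> H) * card H = 2 ^ card I"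
    using Z2cube.lagrange[OF assms(2)] assms(1) by (simp add: order_def card_carrier_Z2cube)
  then have "card H dvd 2 ^ card I" by (metis dvd_triv_right)
  then show ?thesis by (simp add: divides_primepow_nat)
qed

lemma card_rcosets_Z2cube:
  assumes "finite I" "subgroup H (Z2cube I)" "card H = 2 ^ j"
  shows "card (rcosets\<^bsub>Z2cube I\<^esub> H) = 2 ^ (card I - j)"
proof -
  have eq: "card (rcosets\<^bsub>Z2cube I\<^esub> H) * 2 ^ j = 2 ^ card I"
    using Z2cube.lagrange[OF assms(2)] assms by (simp add: order_def card_carrier_Z2cube)
  then obtain e where e: "card (rcosets\<^bsub>Z2cube I\<^esub> H) = 2 ^ e"
    by (metis dvd_triv_left divides_primepow_nat two_is_prime_nat)
  then have "e + j = card I" using eq by (simp add: power_add[symmetric])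
  then show ?thesis using e by simp
qed

section \<open>Splitting off a coordinate\<close>

lemma rcoset_subset_carrier_Z2cube:
  "subgroup K (Z2cube I) \<Longrightarrow> W \<in> rcosets\<^bsub>Z2cube I\<^esub> K \<Longrightarrow> W \<subseteq> carrier (Z2cube I)"
  using Z2cube.rcosets_part_G by blast

text \<open>Deleting coordinate i is modelled as x(i := undefined), which keeps x extensional on I - {i}.\<close>

definition slice :: "'a \<Rightarrow> int \<Rightarrow> ('a \<Rightarrow> int) set \<Rightarrow> ('a \<Rightarrow> int) set" where
  "slice i c H = (\<lambda>x. x(i := undefined)) ` {x \<in> H. x i = c}"

definition glue :: "'a \<Rightarrow> ('a \<Rightarrow> int) set \<Rightarrow> ('a \<Rightarrow> int) set \<Rightarrow> ('a \<Rightarrow> int) set" where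
  "glue i K W = (\<lambda>y. y(i := 0)) ` K \<union> (\<lambda>y. y(i := 1)) ` W"

lemma fun_upd_in_carrier_Z2cube:
  "y \<in> carrier (Z2cube (I - {i})) \<Longrightarrow> i \<in> I \<Longrightarrow> c \<in> {0, 1} \<Longrightarrow> y(i := c) \<in> carrier (Z2cube I)"
  by (auto simp: carrier_Z2cube PiE_iff extensional_def)

lemma fun_upd_undefined_in_carrier_Z2cube:
  "x \<in> carrier (Z2cube I) \<Longrightarrow> x(i := undefined) \<in> carrier (Z2cube (I - {i}))"
  by (auto simp: carrier_Z2cube PiE_iff extensional_def)

lemma fun_upd_undefined_eq_self_Z2cube:
  "y \<in> carrier (Z2cube (I - {i})) \<Longrightarrow> y(i := undefined) = y"
  by (auto simp: carrier_Z2cube PiE_iff extensional_def)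

lemma mult_Z2cube_apply: "i \<in> I \<Longrightarrow> (x \<otimes>\<^bsub>Z2cube I\<^esub> y) i = (x i + y i) mod 2"
  by (simp add: mult_Z2cube)

lemma mult_Z2cube_fun_upd:
  assumes "i \<in> I"
  shows "y(i := c) \<otimes>\<^bsub>Z2cube I\<^esub> z(i := d) = (y \<otimes>\<^bsub>Z2cube (I - {i})\<^esub> z)(i := (c + d) mod 2)"
  using assms by (auto simp: mult_Z2cube)

lemma mult_Z2cube_fun_upd_undefined:
  "(x \<otimes>\<^bsub>Z2cube I\<^esub> y)(i := undefined) = x(i := undefined) \<otimes>\<^bsub>Z2cube (I - {i})\<^esub> y(i := undefined)"
  by (auto simp: mult_Z2cube)

lemma Z2cube_mult_rcoset:
  assumes K: "subgroup K (Z2cube I)" and v: "v \<in> carrier (Z2cube I)"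
    and a: "a \<in> K" and w: "w \<in> K #>\<^bsub>Z2cube I\<^esub> v"
  shows "a \<otimes>\<^bsub>Z2cube I\<^esub> w \<in> K #>\<^bsub>Z2cube I\<^esub> v"
proof -
  obtain b where "b \<in> K" "w = b \<otimes>\<^bsub>Z2cube I\<^esub> v" using w by (auto simp: r_coset_def)
  then show ?thesis using a v subgroup.mem_carrier[OF K] subgroup.m_closed[OF K]
    by (auto simp: r_coset_def Z2cube.m_assoc intro!: bexI[of _ "a \<otimes>\<^bsub>Z2cube I\<^esub> b"])
qed

lemma Z2cube_rcoset_mult_rcoset:
  assumes K: "subgroup K (Z2cube I)" and v: "v \<in> carrier (Z2cube I)"
    and "w \<in> K #>\<^bsub>Z2cube I\<^esub> v" "w' \<in> K #>\<^bsub>Z2cube I\<^esub> v"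
  shows "w \<otimes>\<^bsub>Z2cube I\<^esub> w' \<in> K"
proof -
  obtain b b' where b: "b \<in> K" "b' \<in> K" and w: "w = b \<otimes>\<^bsub>Z2cube I\<^esub> v" "w' = b' \<otimes>\<^bsub>Z2cube I\<^esub> v"
    using assms(3,4) by (auto simp: r_coset_def)
  have "w \<otimes>\<^bsub>Z2cube I\<^esub> w' = b \<otimes>\<^bsub>Z2cube I\<^esub> b' \<otimes>\<^bsub>Z2cube I\<^esub> (v \<otimes>\<^bsub>Z2cube I\<^esub> v)"
    using b v subgroup.mem_carrier[OF K] by (simp add: w Z2cube.m_ac)
  then show ?thesis using b v subgroup.mem_carrier[OF K] subgroup.m_closed[OF K]
    by (simp add: Z2cube_mult_self)
qed

lemma subgroup_Z2cubeI:
  assumes "H \<subseteq> carrier (Z2cube I)" "H \<noteq> {}"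
    and "\<And>x y. x \<in> H \<Longrightarrow> y \<in> H \<Longrightarrow> x \<otimes>\<^bsub>Z2cube I\<^esub> y \<in> H"
  shows "subgroup H (Z2cube I)"
  using assms by (intro Z2cube.subgroupI) (auto simp: Z2cube_inv)

lemma subgroup_glue:
  assumes i: "i \<in> I" and K: "subgroup K (Z2cube (I - {i}))"
    and W: "W = {} \<or> W \<in> rcosets\<^bsub>Z2cube (I - {i})\<^esub> K"
  shows "subgroup (glue i K W) (Z2cube I)"
proof -
  let ?J = "I - {i}"
  note KJ = subgroup.mem_carrier[OF K]
  have WJ: "W \<subseteq> carrier (Z2cube ?J)"
    using W rcoset_subset_carrier_Z2cube[OF K] by auto
  have KW: "\<And>a w. a \<in> K \<Longrightarrow> w \<in> W \<Longrightarrow> a \<otimes>\<^bsub>Z2cube ?J\<^esub> w \<in> W"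
    and WW: "\<And>w w'. w \<in> W \<Longrightarrow> w' \<in> W \<Longrightarrow> w \<otimes>\<^bsub>Z2cube ?J\<^esub> w' \<in> K"
    using W by (auto simp: RCOSETS_def intro: Z2cube_mult_rcoset[OF K] Z2cube_rcoset_mult_rcoset[OF K])
  have WK: "w \<otimes>\<^bsub>Z2cube ?J\<^esub> a \<in> W" if "a \<in> K" "w \<in> W" for a w
    using KW[OF that] that KJ WJ by (simp add: Z2cube.m_comm subset_iff)
  have "glue i K W \<subseteq> carrier (Z2cube I)"
    using KJ WJ i by (auto simp: glue_def intro!: fun_upd_in_carrier_Z2cube)
  moreover have "\<one>\<^bsub>Z2cube ?J\<^esub>(i := 0) \<in> glue i K W"
    using subgroup.one_closed[OF K] by (simp add: glue_def)
  moreover have "x \<otimes>\<^bsub>Z2cube I\<^esub> y \<in> glue i K W" if "x \<in> glue i K W" "y \<in> glue i K W" for x y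
    using that subgroup.m_closed[OF K] KW WK WW
    by (auto simp: glue_def mult_Z2cube_fun_upd[OF i] subset_iff)
  ultimately show ?thesis by (intro subgroup_Z2cubeI) auto
qed

lemma slice_subset_carrier:
  "H \<subseteq> carrier (Z2cube I) \<Longrightarrow> slice i c H \<subseteq> carrier (Z2cube (I - {i}))"
  by (auto simp: slice_def intro: fun_upd_undefined_in_carrier_Z2cube)

lemma subgroup_slice_zero:
  assumes i: "i \<in> I" and H: "subgroup H (Z2cube I)"
  shows "subgroup (slice i 0 H) (Z2cube (I - {i}))"
proof (rule subgroup_Z2cubeI)
  show "slice i 0 H \<subseteq> carrier (Z2cube (I - {i}))"
    by (rule slice_subset_carrier[OF subgroup.subset[OF H]])
  show "slice i 0 H \<noteq> {}"
    using subgroup.one_closed[OF H] i by (auto simp: slice_def one_Z2cube)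
  show "x \<otimes>\<^bsub>Z2cube (I - {i})\<^esub> y \<in> slice i 0 H" if x: "x \<in> slice i 0 H" and y: "y \<in> slice i 0 H" for x y
  proof -
    obtain a where "a \<in> H" "a i = 0" "x = a(i := undefined)"
      using x unfolding slice_def by blast
    moreover obtain b where "b \<in> H" "b i = 0" "y = b(i := undefined)"
      using y unfolding slice_def by blast
    ultimately show ?thesis
      using subgroup.m_closed[OF H] i unfolding slice_def
      by (auto simp: mult_Z2cube_fun_upd_undefined[symmetric] mult_Z2cube_apply intro!: imageI)
  qed
qed

lemma slice_one_rcoset:
  assumes i: "i \<in> I" and H: "subgroup H (Z2cube I)"
  shows "slice i 1 H = {} \<or> slice i 1 H \<in> rcosets\<^bsub>Z2cube (I - {i})\<^esub> (slice i 0 H)"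
proof (cases "slice i 1 H = {}")
  case False
  let ?J = "I - {i}"
  obtain x0 where x0: "x0 \<in> H" "x0 i = 1" using False unfolding slice_def by blast
  \<comment> \<open>multiplication by x0 swaps the two slices\<close>
  define v where "v = x0(i := undefined)"
  note HI = subgroup.mem_carrier[OF H]
  have v: "v \<in> carrier (Z2cube ?J)"
    unfolding v_def using HI[OF x0(1)] by (rule fun_upd_undefined_in_carrier_Z2cube)
  have shift: "(x \<otimes>\<^bsub>Z2cube I\<^esub> x0)(i := undefined) = x(i := undefined) \<otimes>\<^bsub>Z2cube ?J\<^esub> v" for x
    by (simp add: v_def mult_Z2cube_fun_upd_undefined)
  have shift_slice: "x(i := undefined) \<otimes>\<^bsub>Z2cube ?J\<^esub> v \<in> slice i (1 - c) H"
    if "x \<in> H" "x i = c" "c \<in> {0, 1}" for x c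
  proof -
    have "(x \<otimes>\<^bsub>Z2cube I\<^esub> x0) i = 1 - c"
      using that x0 by (auto simp: mult_Z2cube_apply[OF i])
    then show ?thesis
      unfolding slice_def shift[symmetric] using subgroup.m_closed[OF H that(1) x0(1)] by blast
  qed
  have "slice i 1 H = slice i 0 H #>\<^bsub>Z2cube ?J\<^esub> v"
  proof (intro equalityI subsetI)
    fix w assume "w \<in> slice i 1 H"
    then obtain x where x: "x \<in> H" "x i = 1" "w = x(i := undefined)" unfolding slice_def by blast
    have wJ: "w \<in> carrier (Z2cube ?J)"
      unfolding x(3) using HI[OF x(1)] by (rule fun_upd_undefined_in_carrier_Z2cube)
    have "w \<otimes>\<^bsub>Z2cube ?J\<^esub> v \<otimes>\<^bsub>Z2cube ?J\<^esub> v = w"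
      using wJ v by (simp add: Z2cube.m_assoc Z2cube_mult_self)
    moreover have "w \<otimes>\<^bsub>Z2cube ?J\<^esub> v \<in> slice i 0 H"
      using shift_slice[OF x(1,2)] x(3) by simp
    ultimately show "w \<in> slice i 0 H #>\<^bsub>Z2cube ?J\<^esub> v"
      using Z2cube.rcosI[OF _ slice_subset_carrier[OF subgroup.subset[OF H]] v] by metis
  next
    fix w assume "w \<in> slice i 0 H #>\<^bsub>Z2cube ?J\<^esub> v"
    then obtain x where "x \<in> H" "x i = 0" "w = x(i := undefined) \<otimes>\<^bsub>Z2cube ?J\<^esub> v"
      unfolding r_coset_def slice_def by blast
    then show "w \<in> slice i 1 H"
      using shift_slice[of x 0] by simp
  qed
  then show ?thesis using v unfolding RCOSETS_def by blast
qed simp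

lemma glue_slices:
  assumes "H \<subseteq> carrier (Z2cube I)" "i \<in> I"
  shows "glue i (slice i 0 H) (slice i 1 H) = H"
proof -
  have "(\<lambda>x. x(i := c)) ` {x \<in> H. x i = c} = (\<lambda>x. x) ` {x \<in> H. x i = c}" for c
    by (rule image_cong) (auto simp: fun_upd_idem)
  moreover have "{x \<in> H. x i = 0} \<union> {x \<in> H. x i = 1} = H"
    using assms by (auto simp: carrier_Z2cube)
  ultimately show ?thesis by (simp add: glue_def slice_def image_image)
qed

lemma slice_glue_zero:
  assumes "K \<subseteq> carrier (Z2cube (I - {i}))"
  shows "slice i 0 (glue i K W) = K"
proof -
  have "{x \<in> glue i K W. x i = 0} = (\<lambda>y. y(i := 0)) ` K" by (auto simp: glue_def)
  then have "slice i 0 (glue i K W) = (\<lambda>y. y(i := undefined)) ` K"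
    by (simp add: slice_def image_image)
  also have "\<dots> = (\<lambda>y. y) ` K"
    using assms by (intro image_cong) (auto simp: fun_upd_undefined_eq_self_Z2cube)
  finally show ?thesis by simp
qed

lemma slice_glue_one:
  assumes "W \<subseteq> carrier (Z2cube (I - {i}))"
  shows "slice i 1 (glue i K W) = W"
proof -
  have "{x \<in> glue i K W. x i = 1} = (\<lambda>y. y(i := 1)) ` W" by (auto simp: glue_def)
  then have "slice i 1 (glue i K W) = (\<lambda>y. y(i := undefined)) ` W"
    by (simp add: slice_def image_image)
  also have "\<dots> = (\<lambda>y. y) ` W"
    using assms by (intro image_cong) (auto simp: fun_upd_undefined_eq_self_Z2cube)
  finally show ?thesis by simp
qed

lemma card_glue:
  assumes "K \<subseteq> carrier (Z2cube (I - {i}))" "W \<subseteq> carrier (Z2cube (I - {i}))"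
    and "finite K" "finite W"
  shows "card (glue i K W) = card K + card W"
proof -
  have inj: "inj_on (\<lambda>y. y(i := c)) (carrier (Z2cube (I - {i})))" for c :: int
    by (rule inj_onI) (metis fun_upd_upd fun_upd_undefined_eq_self_Z2cube)
  have "(\<lambda>y. y(i := 0)) ` K \<inter> (\<lambda>y. y(i := 1)) ` W = {}"
    by (auto dest: fun_cong[of _ _ i])
  then show ?thesis
    using assms inj_on_subset[OF inj] unfolding glue_def by (simp add: card_Un_disjoint card_image)
qed

lemma card_glue_empty:
  assumes "finite I" "subgroup K (Z2cube (I - {i}))"
  shows "card (glue i K {}) = card K"
proof -
  have "finite K"
    using assms finite_subset[OF subgroup.subset finite_carrier_Z2cube] by blast
  then show ?thesis
    using card_glue[OF subgroup.subset[OF assms(2)]] by simp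
qed

lemma card_glue_rcoset:
  assumes I: "finite I" and K: "subgroup K (Z2cube (I - {i}))"
    and W: "W \<in> rcosets\<^bsub>Z2cube (I - {i})\<^esub> K"
  shows "card (glue i K W) = 2 * card K"
proof -
  have fin: "finite (carrier (Z2cube (I - {i})))" using I by (simp add: finite_carrier_Z2cube)
  have "card W = card K"
    using Z2cube.card_rcosets_equal[OF W subgroup.subset[OF K]] by simp
  then show ?thesis
    using subgroup.subset[OF K] rcoset_subset_carrier_Z2cube[OF K W] finite_subset[OF _ fin]
    by (simp add: card_glue)
qed

lemma bij_betw_glue_subgroups:
  assumes i: "i \<in> I"
  shows "bij_betw (\<lambda>(K, W). glue i K W)
    {(K, W). subgroup K (Z2cube (I - {i})) \<and> (W = {} \<or> W \<in> rcosets\<^bsub>Z2cube (I - {i})\<^esub> K)}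
    {H. subgroup H (Z2cube I)}"
proof -
  have "slice i 0 (glue i K W) = K" "slice i 1 (glue i K W) = W"
    if "subgroup K (Z2cube (I - {i}))" "W = {} \<or> W \<in> rcosets\<^bsub>Z2cube (I - {i})\<^esub> K" for K W
  proof -
    have "K \<subseteq> carrier (Z2cube (I - {i}))" "W \<subseteq> carrier (Z2cube (I - {i}))"
      using subgroup.subset[OF that(1)] rcoset_subset_carrier_Z2cube[OF that(1)] that(2) by auto
    then show "slice i 0 (glue i K W) = K" "slice i 1 (glue i K W) = W"
      by (simp_all add: slice_glue_zero slice_glue_one)
  qed
  moreover have "glue i (slice i 0 H) (slice i 1 H) = H"
    and "subgroup (slice i 0 H) (Z2cube (I - {i}))"
    and "slice i 1 H = {} \<or> slice i 1 H \<in> rcosets\<^bsub>Z2cube (I - {i})\<^esub> (slice i 0 H)"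
    if "subgroup H (Z2cube I)" for H
    using glue_slices[OF subgroup.subset[OF that] i] subgroup_slice_zero[OF i that]
      slice_one_rcoset[OF i that] by blast+
  ultimately show ?thesis
    using subgroup_glue[OF i]
    by (intro bij_betw_byWitness[where f' = "\<lambda>H. (slice i 0 H, slice i 1 H)"]) fastforce+
qed

lemma finite_subgroups_Z2cube: "finite I \<Longrightarrow> finite {H. subgroup H (Z2cube I)}"
  by (rule finite_subset[of _ "Pow (carrier (Z2cube I))"])
    (auto simp: finite_carrier_Z2cube dest: subgroup.mem_carrier)

lemma card_Collect_bij_betw:
  assumes "bij_betw f A B"
  shows "card {b \<in> B. P b} = card {a \<in> A. P (f a)}"
proof -
  have "bij_betw f {a \<in> A. P (f a)} {b \<in> B. P b}"
    by (rule bij_betw_subset[OF assms]) (use assms in \<open>auto simp: bij_betw_def\<close>)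
  then show ?thesis by (simp add: bij_betw_same_card)
qed

lemma card_subgroups_of_card_Z2cube_split:
  fixes I :: "'a set"
  assumes I: "finite I" and i: "i \<in> I"
  shows "card {H. subgroup H (Z2cube I) \<and> card H = m} =
    card {K. subgroup K (Z2cube (I - {i})) \<and> card K = m} +
    (\<Sum>K | subgroup K (Z2cube (I - {i})) \<and> 2 * card K = m. card (rcosets\<^bsub>Z2cube (I - {i})\<^esub> K))"
proof -
  let ?J = "I - {i}"
  let ?Q = "{(K, W). subgroup K (Z2cube ?J) \<and> (W = {} \<or> W \<in> rcosets\<^bsub>Z2cube ?J\<^esub> K)}"
  let ?A = "(\<lambda>K. (K, {} :: ('a \<Rightarrow> int) set)) ` {K. subgroup K (Z2cube ?J) \<and> card K = m}"
  let ?B = "Sigma {K. subgroup K (Z2cube ?J) \<and> 2 * card K = m} (\<lambda>K. rcosets\<^bsub>Z2cube ?J\<^esub> K)"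
  have fin: "finite {K. subgroup K (Z2cube ?J)}"
    using I by (simp add: finite_subgroups_Z2cube)
  have fin_rcosets: "finite (rcosets\<^bsub>Z2cube ?J\<^esub> K)" if "subgroup K (Z2cube ?J)" for K
    using Z2cube.rcosets_subset_PowG[OF that] I by (simp add: finite_subset finite_carrier_Z2cube)
  have nonempty: "W \<noteq> {}" if "subgroup K (Z2cube ?J)" "W \<in> rcosets\<^bsub>Z2cube ?J\<^esub> K" for K W
    using subgroup.rcosets_non_empty[OF that] .
  have card_glue_Q: "card (glue i K W) = (if W = {} then card K else 2 * card K)" if "(K, W) \<in> ?Q" for K W
    using that I by (auto simp: card_glue_empty card_glue_rcoset)
  have "card {H. subgroup H (Z2cube I) \<and> card H = m} = card {p \<in> ?Q. card (glue i (fst p) (snd p)) = m}"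
    using card_Collect_bij_betw[OF bij_betw_glue_subgroups[OF i], of "\<lambda>H. card H = m"]
    by (simp add: case_prod_beta)
  also have "{p \<in> ?Q. card (glue i (fst p) (snd p)) = m} = ?A \<union> ?B"
    using card_glue_Q nonempty by (fastforce split: if_splits)
  also have "card (?A \<union> ?B) = card ?A + card ?B"
  proof (rule card_Un_disjoint)
    show "finite ?A" using fin by (auto intro: finite_subset)
    show "finite ?B" using fin fin_rcosets by (auto intro: finite_subset)
    show "?A \<inter> ?B = {}" using nonempty by auto
  qed
  also have "card ?A = card {K. subgroup K (Z2cube ?J) \<and> card K = m}"
    by (rule card_image) (auto intro: inj_onI)
  also have "card ?B = (\<Sum>K | subgroup K (Z2cube ?J) \<and> 2 * card K = m. card (rcosets\<^bsub>Z2cube ?J\<^esub> K))"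
    using fin fin_rcosets by (intro card_SigmaI) auto
  finally show ?thesis .
qed

section \<open>Counting subgroups by order\<close>

lemma gbinom2_0_right: "gbinom2 n 0 = 1"
  by (simp add: gbinom2_def)

lemma gbinom2_0_Suc: "gbinom2 0 (Suc j) = 0"
  by (simp add: gbinom2_def prod_zero_iff)

lemma gbinom2_Suc_Suc: "gbinom2 (Suc n) (Suc j) = gbinom2 n (Suc j) + 2 ^ (n - j) * gbinom2 n j"
proof -
  define P where "P = (\<Prod>l\<in>{0..<j}. (2::rat) ^ (n - l) - 1)"
  define D where "D = (\<Prod>l\<in>{1..j}. (2::rat) ^ l - 1)"
  have pos: "(2::rat) ^ l - 1 \<noteq> 0" if "l \<ge> 1" for l
  proof -
    have "(1::rat) < 2 ^ l" using that by (intro one_less_power) auto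
    then show ?thesis by simp
  qed
  have den: "(\<Prod>l\<in>{1..Suc j}. (2::rat) ^ l - 1) = D * (2 ^ Suc j - 1)"
    by (simp add: D_def prod.cl_ivl_Suc)
  have num_Suc: "(\<Prod>l\<in>{0..<Suc j}. (2::rat) ^ (Suc n - l) - 1) = (2 ^ Suc n - 1) * P"
    unfolding P_def by (subst prod.atLeast0_lessThan_Suc_shift) simp
  have num: "(\<Prod>l\<in>{0..<Suc j}. (2::rat) ^ (n - l) - 1) = P * (2 ^ (n - j) - 1)"
    unfolding P_def by (rule prod.atLeast0_lessThan_Suc)
  have D: "D \<noteq> 0" unfolding D_def using pos by (simp add: prod_zero_iff)
  have q: "(2::rat) ^ Suc j - 1 \<noteq> 0" using pos[of "Suc j"] by simp
  have g_Suc_Suc: "gbinom2 (Suc n) (Suc j) = (2 ^ Suc n - 1) * P / (D * (2 ^ Suc j - 1))"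
    by (simp only: gbinom2_def num_Suc den)
  have g_Suc: "gbinom2 n (Suc j) = P * (2 ^ (n - j) - 1) / (D * (2 ^ Suc j - 1))"
    by (simp only: gbinom2_def num den)
  have g: "gbinom2 n j = P / D"
    by (simp only: gbinom2_def P_def D_def)
  have key: "(2 ^ Suc n - 1) * P = P * (2 ^ (n - j) - 1) + 2 ^ (n - j) * P * (2 ^ Suc j - 1)"
  proof (cases "j \<le> n")
    case True
    then have "(2::rat) ^ (n - j) * 2 ^ Suc j = 2 ^ Suc n" by (simp flip: power_add)
    then show ?thesis by (simp add: algebra_simps)
  next
    case False
    then have "P = 0" unfolding P_def by (intro prod_zero) (auto intro!: bexI[of _ n])
    then show ?thesis by simp
  qed
  have "gbinom2 n (Suc j) + 2 ^ (n - j) * gbinom2 n j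
      = (P * (2 ^ (n - j) - 1) + 2 ^ (n - j) * P * (2 ^ Suc j - 1)) / (D * (2 ^ Suc j - 1))"
    unfolding g_Suc g using D q by (simp add: field_simps)
  also have "\<dots> = gbinom2 (Suc n) (Suc j)"
    unfolding g_Suc_Suc key ..
  finally show ?thesis ..
qed

lemma subgroups_of_card_Z2cube_empty:
  "{H. subgroup H (Z2cube {}) \<and> card H = n} = (if n = 1 then {{\<one>\<^bsub>Z2cube {}\<^esub>}} else {})"
  (is "{H. subgroup H ?G \<and> _} = _")
proof -
  have "carrier ?G = {\<one>\<^bsub>?G\<^esub>}" by (auto simp: carrier_Z2cube one_Z2cube)
  then have "subgroup H ?G \<longleftrightarrow> H = {\<one>\<^bsub>?G\<^esub>}" for H
    using Z2cube.triv_subgroup by (auto dest: subgroup.subset subgroup.one_closed)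
  then show ?thesis by (simp add: Collect_conv_if)
qed

lemma card_subgroups_of_card_Z2cube:
  assumes "finite I"
  shows "rat_of_nat (card {H. subgroup H (Z2cube I) \<and> card H = 2 ^ j}) = gbinom2 (card I) j"
  using assms
proof (induction I arbitrary: j rule: finite_induct)
  case empty
  show ?case
    by (cases j) (simp_all add: subgroups_of_card_Z2cube_empty gbinom2_0_right gbinom2_0_Suc)
next
  case (insert i I)
  have J: "insert i I - {i} = I" using insert.hyps(2) by simp
  note split = card_subgroups_of_card_Z2cube_split[OF finite.insertI[OF insert.hyps(1)] insertI1, unfolded J]
  show ?case
  proof (cases j)
    case 0
    then show ?thesis
      using split[where m = 1] insert.IH[of 0] insert.hyps by (simp add: gbinom2_0_right)
  next
    case (Suc j')
    have "(\<Sum>K | subgroup K (Z2cube I) \<and> 2 * card K = 2 ^ Suc j'. card (rcosets\<^bsub>Z2cube I\<^esub> K))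
        = (\<Sum>K | subgroup K (Z2cube I) \<and> card K = 2 ^ j'. 2 ^ (card I - j'))"
      using card_rcosets_Z2cube[OF insert.hyps(1)] by (intro sum.cong) auto
    then show ?thesis
      using split[where m = "2 ^ Suc j'"] insert.IH[of j'] insert.IH[of "Suc j'"] insert.hyps Suc
      by (simp add: gbinom2_Suc_Suc)
  qed
qed

lemma card_subgroups_Z2cube:
  assumes I: "finite I"
  shows "rat_of_nat (card {H. subgroup H (Z2cube I)}) = (\<Sum>j=0..card I. gbinom2 (card I) j)"
proof -
  have "{H. subgroup H (Z2cube I)} = (\<Union>j\<in>{0..card I}. {H. subgroup H (Z2cube I) \<and> card H = 2 ^ j})"
    using card_subgroup_Z2cube_power_of_two[OF I] by fastforce
  moreover have "card (\<Union>j\<in>{0..card I}. {H. subgroup H (Z2cube I) \<and> card H = 2 ^ j})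
      = (\<Sum>j=0..card I. card {H. subgroup H (Z2cube I) \<and> card H = 2 ^ j})"
    using finite_subgroups_Z2cube[OF I] by (intro card_UN_disjoint) auto
  ultimately show ?thesis
    using card_subgroups_of_card_Z2cube[OF I] by simp
qed

section \<open>Inclusion-exclusion over the support\<close>

definition coordinate_support :: "'a set \<Rightarrow> ('a \<Rightarrow> int) set \<Rightarrow> 'a set" where
  "coordinate_support I H = {j \<in> I. \<exists>x\<in>H. x j \<noteq> 0}"

lemma group_hom_Z2cube: "h \<in> hom (Z2cube I) (Z2cube J) \<Longrightarrow> group_hom (Z2cube I) (Z2cube J) h"
  by (simp add: group_hom_def group_hom_axioms_def Z2cube.is_group)

lemma restrict_hom_Z2cube: "S \<subseteq> I \<Longrightarrow> (\<lambda>x. restrict x S) \<in> hom (Z2cube I) (Z2cube S)"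
  by (auto simp: hom_def carrier_Z2cube mult_Z2cube Int_absorb1 intro!: ext)

lemma zero_extension_hom_Z2cube:
  "(\<lambda>x. \<lambda>j\<in>I. if j \<in> S then x j else 0) \<in> hom (Z2cube S) (Z2cube I)"
  by (auto simp: hom_def carrier_Z2cube mult_Z2cube PiE_iff intro!: ext)

lemma bij_betw_subgroups_support_subset:
  assumes "S \<subseteq> I"
  shows "bij_betw (\<lambda>K. (\<lambda>x. \<lambda>j\<in>I. if j \<in> S then x j else 0) ` K)
    {K. subgroup K (Z2cube S)} {H. subgroup H (Z2cube I) \<and> coordinate_support I H \<subseteq> S}"
proof -
  let ?ext = "\<lambda>x. \<lambda>j\<in>I. if j \<in> S then x j else 0"
  let ?res = "\<lambda>x. restrict x S"
  have res_ext: "?res (?ext x) = x" if "x \<in> carrier (Z2cube S)" for x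
    using that assms by (auto simp: carrier_Z2cube PiE_iff extensional_def Int_absorb1 intro!: ext)
  have ext_res: "?ext (?res x) = x" if "x \<in> carrier (Z2cube I)" "\<forall>j\<in>I - S. x j = 0" for x
    using that by (auto simp: carrier_Z2cube PiE_iff extensional_def)
  have res_ext_image: "?res ` ?ext ` K = K" if "subgroup K (Z2cube S)" for K
    using res_ext subgroup.mem_carrier[OF that] by (force simp: image_image)
  have ext_res_image: "?ext ` ?res ` H = H"
    if "subgroup H (Z2cube I)" "coordinate_support I H \<subseteq> S" for H
  proof -
    have "?ext (?res x) = x" if "x \<in> H" for x
      using ext_res subgroup.mem_carrier[OF \<open>subgroup H (Z2cube I)\<close> that]
        \<open>coordinate_support I H \<subseteq> S\<close> that by (auto simp: coordinate_support_def)
    then show ?thesis by (force simp: image_image)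
  qed
  have subgroup_ext: "subgroup (?ext ` K) (Z2cube I)" if "subgroup K (Z2cube S)" for K
    using group_hom.subgroup_img_is_subgroup[OF group_hom_Z2cube[OF zero_extension_hom_Z2cube] that] .
  have support_ext: "coordinate_support I (?ext ` K) \<subseteq> S" for K
    by (auto simp: coordinate_support_def)
  have subgroup_res: "subgroup (?res ` H) (Z2cube S)" if "subgroup H (Z2cube I)" for H
    using group_hom.subgroup_img_is_subgroup[OF group_hom_Z2cube[OF restrict_hom_Z2cube[OF assms]] that] .
  show ?thesis
  proof (rule bij_betw_byWitness[where f' = "\<lambda>H. ?res ` H"])
    show "\<forall>K\<in>{K. subgroup K (Z2cube S)}. ?res ` ?ext ` K = K"
      using res_ext_image by simp
    show "\<forall>H\<in>{H. subgroup H (Z2cube I) \<and> coordinate_support I H \<subseteq> S}. ?ext ` ?res ` H = H"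
      using ext_res_image by simp
    show "(\<lambda>K. ?ext ` K) ` {K. subgroup K (Z2cube S)}
        \<subseteq> {H. subgroup H (Z2cube I) \<and> coordinate_support I H \<subseteq> S}"
      using subgroup_ext support_ext by auto
    show "(\<lambda>H. ?res ` H) ` {H. subgroup H (Z2cube I) \<and> coordinate_support I H \<subseteq> S}
        \<subseteq> {K. subgroup K (Z2cube S)}"
      using subgroup_res by auto
  qed
qed

lemma card_Collect_subset_eq_sum_fibres:
  assumes "finite X" "finite T"
  shows "card {x \<in> X. f x \<subseteq> T} = (\<Sum>U\<in>Pow T. card {x \<in> X. f x = U})"
proof -
  have "{x \<in> X. f x \<subseteq> T} = (\<Union>U\<in>Pow T. {x \<in> X. f x = U})" by auto
  also have "card \<dots> = (\<Sum>U\<in>Pow T. card {x \<in> X. f x = U})"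
    by (rule card_UN_disjoint) (use assms in auto)
  finally show ?thesis .
qed

lemma sum_Pow_card:
  assumes "finite A"
  shows "(\<Sum>T\<in>Pow A. g (card T)) = (\<Sum>k=0..card A. of_nat (card A choose k) * g k)"
proof -
  have "(\<Sum>T\<in>Pow A. g (card T)) = (\<Sum>k=0..card A. \<Sum>T | T \<in> Pow A \<and> card T = k. g (card T))"
    using assms by (intro sum.group[symmetric]) (auto intro: card_mono)
  also have "\<dots> = (\<Sum>k=0..card A. of_nat (card A choose k) * g k)"
    using n_subsets[OF assms] by (intro sum.cong) auto
  finally show ?thesis .
qed

lemma card_subgroups_full_support_mobius:
  assumes I: "finite I"
  shows "rat_of_nat (card {H. subgroup H (Z2cube I) \<and> coordinate_support I H = I}) =
    (\<Sum>T\<in>Pow I. (-1) ^ (card I - card T) * rat_of_nat (card {K. subgroup K (Z2cube T)}))"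
proof -
  define f where "f T = rat_of_nat (card {H. subgroup H (Z2cube I) \<and> coordinate_support I H = T})" for T
  have "f I = (\<Sum>T\<in>Pow I. (-1) ^ (card I - card T) * sum f (Pow T))"
    by (rule inclusion_exclusion_mobius) (simp_all add: I)
  also have "\<dots> = (\<Sum>T\<in>Pow I. (-1) ^ (card I - card T) * rat_of_nat (card {K. subgroup K (Z2cube T)}))"
  proof (rule sum.cong)
    fix T assume "T \<in> Pow I"
    then have T: "T \<subseteq> I" "finite T" using I finite_subset by auto
    have "sum f (Pow T) = rat_of_nat (card {H \<in> {H. subgroup H (Z2cube I)}. coordinate_support I H \<subseteq> T})"
      using card_Collect_subset_eq_sum_fibres[OF finite_subgroups_Z2cube[OF I] T(2)]
      by (simp add: f_def)
    also have "\<dots> = rat_of_nat (card {K. subgroup K (Z2cube T)})"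
      using bij_betw_same_card[OF bij_betw_subgroups_support_subset[OF T(1)]] by simp
    finally show "(-1) ^ (card I - card T) * sum f (Pow T) =
        (-1) ^ (card I - card T) * rat_of_nat (card {K. subgroup K (Z2cube T)})" by simp
  qed simp
  finally show ?thesis by (simp add: f_def)
qed

lemma card_subgroups_full_support:
  assumes I: "finite I"
  shows "rat_of_nat (card {H. subgroup H (Z2cube I) \<and> coordinate_support I H = I}) =
    (\<Sum>i=0..card I. (-1) ^ (i + card I) * rat_of_nat (card I choose i) * (\<Sum>j=0..i. gbinom2 i j))"
proof -
  have "(-1) ^ (card I - card T) * rat_of_nat (card {K. subgroup K (Z2cube T)}) =
      (-1) ^ (card T + card I) * (\<Sum>j=0..card T. gbinom2 (card T) j)" if "T \<in> Pow I" for T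
  proof -
    have T: "finite T" "card T \<le> card I" using that I by (auto intro: finite_subset card_mono)
    then have "(-1::rat) ^ (card T + card I) = (-1) ^ (card I - card T)"
      by (simp add: add.commute[of "card T"] neg_one_power_add_eq_neg_one_power_diff)
    then show ?thesis using card_subgroups_Z2cube[OF T(1)] by simp
  qed
  then have "rat_of_nat (card {H. subgroup H (Z2cube I) \<and> coordinate_support I H = I}) =
      (\<Sum>T\<in>Pow I. (-1) ^ (card T + card I) * (\<Sum>j=0..card T. gbinom2 (card T) j))"
    unfolding card_subgroups_full_support_mobius[OF I] by (rule sum.cong[OF refl])
  also have "\<dots> = (\<Sum>i=0..card I. rat_of_nat (card I choose i) * ((-1) ^ (i + card I) * (\<Sum>j=0..i. gbinom2 i j)))"
    by (rule sum_Pow_card[OF I])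
  finally show ?thesis by (simp add: mult_ac)
qed

lemma proj_surjective_iff_full_support:
  assumes H: "subgroup H (Z2pow k)"
  shows "proj_surjective k H \<longleftrightarrow> coordinate_support {..<k} H = {..<k}"
proof -
  have "H \<subseteq> carrier (Z2cube {..<k})"
    using subgroup.subset[OF H] by (simp add: Z2pow_eq_Z2cube)
  then have bits: "(\<lambda>x. x i) ` H \<subseteq> {0, 1}" if "i < k" for i
    using that by (auto simp: carrier_Z2cube PiE_iff)
  have "(\<lambda>j\<in>{..<k}. 0) \<in> H"
    using subgroup.one_closed[OF H] by (simp add: Z2pow_eq_Z2cube one_Z2cube)
  then have zero: "0 \<in> (\<lambda>x. x i) ` H" if "i < k" for i
    using that by (intro image_eqI[where x = "\<lambda>j\<in>{..<k}. 0"]) auto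
  have "(\<lambda>x. x i) ` H = {0, 1} \<longleftrightarrow> (\<exists>x\<in>H. x i \<noteq> 0)" if "i < k" for i
  proof
    assume "(\<lambda>x. x i) ` H = {0, 1}"
    then have "1 \<in> (\<lambda>x. x i) ` H" by simp
    then obtain x where "x \<in> H" "1 = x i" unfolding image_iff by blast
    then show "\<exists>x\<in>H. x i \<noteq> 0" by (intro bexI[where x = x]) auto
  next
    assume "\<exists>x\<in>H. x i \<noteq> 0"
    then obtain x where x: "x \<in> H" "x i \<noteq> 0" by blast
    then have "x i \<in> {0, 1}" using bits[OF that] by blast
    then have "1 \<in> (\<lambda>x. x i) ` H" using x by (intro image_eqI[where x = x]) auto
    then show "(\<lambda>x. x i) ` H = {0, 1}" using bits[OF that] zero[OF that] by auto
  qed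
  moreover have "carrier (integer_mod_group 2) = {0, 1::int}"
    by (auto simp: carrier_integer_mod_group)
  ultimately show ?thesis by (auto simp: proj_surjective_def coordinate_support_def)
qed

theorem mainTheorem5:
  fixes k :: nat
  shows "rat_of_nat (card {H. subgroup H (Z2pow k) \<and> proj_surjective k H}) =
    (\<Sum>i=0..k. (-1) ^ (i + k) * rat_of_nat (k choose i) * (\<Sum>j=0..i. gbinom2 i j))"
proof -
  have "{H. subgroup H (Z2pow k) \<and> proj_surjective k H} =
      {H. subgroup H (Z2cube {..<k}) \<and> coordinate_support {..<k} H = {..<k}}"
    using proj_surjective_iff_full_support by (auto simp: Z2pow_eq_Z2cube)
  then show ?thesis
    using card_subgroups_full_support[of "{..<k}"] by simp
qed

end
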